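(* Let $k\geq1$ and consider real $2k\times2k$ matrices $K,P,A$ where $K$ is an invertible skew-symmetric matrix, $P$ is an orthogonal matrix, $A=\mathrm{diag}(-\alpha_1^2,\dots,-\alpha_{2k}^2)$ with all $\alpha_i\neq0$, and let $\alpha=\pm\sqrt{\alpha_1^2+\dots+\alpha_{2k}^2}$. Suppose $K^2=P^{-1}AP+A\quad\text{and}\quad \alpha K=AP-P^{-1}A.$ Then $k=1$, and there exist $\epsilon,\eta\in\{1,-1\}$ such that $A=\begin{pmatrix}-\alpha_1^2&0\\0&-\alpha_2^2\end{pmatrix},\quad K=\begin{pmatrix}0&\epsilon\sqrt{\alpha_1^2+\alpha_2^2}\\-\epsilon\sqrt{\alpha_1^2+\alpha_2^2}&0\end{pmatrix},\quad P=\begin{pmatrix}0&-\eta\epsilon\\\eta\epsilon&0\end{pmatrix}.$ *)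

theory Defs
  imports Complex_Main "Jordan_Normal_Form.Matrix"
begin

definition skew_symmetric_mat :: "real mat \<Rightarrow> bool" where
  "skew_symmetric_mat K \<longleftrightarrow> transpose_mat K = - K"

definition orthogonal_real_mat :: "real mat \<Rightarrow> bool" where
  "orthogonal_real_mat P \<longleftrightarrow> square_mat P \<and> transpose_mat P * P = 1\<^sub>m (dim_row P)"

definition diag_real_mat :: "nat \<Rightarrow> (nat \<Rightarrow> real) \<Rightarrow> real mat" where
  "diag_real_mat n d = mat n n (\<lambda>(i,j). if i = j then d i else 0)"

end

theory Submission
  imports Defs "Jordan_Normal_Form.Determinant"
begin

(* Write d_i = alpha_i^2, so that A = -diag(d) and alpha^2 = s := sum_i d_i. The second equation
   gives alpha K_ij = d_j P_ji - d_i P_ij, which is skew by its shape, so the i-th diagonal entry of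
   alpha^2 K^2, evaluated with the first equation, becomes
     sum_l (d_l P_li - d_i P_il)^2 = s (sum_l d_l P_li^2 + d_i).
   Expanding the square with unit rows of P and d_l <= s gives s <= d_i - 2 sum_l d_l P_li P_il for
   every i; summing over i and using 2 |P_li P_il| <= P_li^2 + P_il^2 yields 2k s <= 3 s, so k = 1.
   For k = 1 the identity at i = 0 forces P to be antidiagonal, and K is then read off from
   alpha K = AP - P^T A. *)

lemma index_mult_mat_sum:
  assumes "X \<in> carrier_mat n m" "Y \<in> carrier_mat m p" "i < n" "j < p"
  shows "(X * Y) $$ (i,j) = (\<Sum>l<m. X $$ (i,l) * Y $$ (l,j))"
  using assms by (simp add: scalar_prod_def lessThan_atLeast0)

lemma diag_real_mat_eq_mat_diag: "diag_real_mat n d = mat_diag n d"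
  unfolding diag_real_mat_def mat_diag_def by (rule cong_mat) auto

lemma index_diag_real_mat_mult:
  assumes "X \<in> carrier_mat n m" "i < n" "j < m"
  shows "(diag_real_mat n d * X) $$ (i,j) = d i * X $$ (i,j)"
  using assms by (simp add: diag_real_mat_eq_mat_diag mat_diag_mult_left)

lemma index_mult_diag_real_mat:
  assumes "X \<in> carrier_mat m n" "i < m" "j < n"
  shows "(X * diag_real_mat n d) $$ (i,j) = X $$ (i,j) * d j"
  using assms by (simp add: diag_real_mat_eq_mat_diag mat_diag_mult_right)

lemma orthogonal_real_mat_mult_transpose:
  assumes "orthogonal_real_mat P" "P \<in> carrier_mat n n"
  shows "P * transpose_mat P = 1\<^sub>m n"
  using assms mat_mult_left_right_inverse[of "transpose_mat P" n P]
  by (simp add: orthogonal_real_mat_def)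

lemma orthogonal_real_mat_right_inverse:
  assumes "orthogonal_real_mat P" "P \<in> carrier_mat n n" "Q \<in> carrier_mat n n"
    and "P * Q = 1\<^sub>m n"
  shows "Q = transpose_mat P"
proof -
  have "Q = (transpose_mat P * P) * Q"
    using assms by (simp add: orthogonal_real_mat_def)
  also have "\<dots> = transpose_mat P * (P * Q)"
    using assms by (simp add: assoc_mult_mat[of _ n n _ n _ n])
  finally show ?thesis
    using assms by simp
qed

lemma orthogonal_real_mat_col_norm:
  assumes "orthogonal_real_mat P" "P \<in> carrier_mat n n" "j < n"
  shows "(\<Sum>l<n. (P $$ (l,j))\<^sup>2) = 1"
proof -
  have "(transpose_mat P * P) $$ (j,j) = 1"
    using assms by (simp add: orthogonal_real_mat_def)
  then show ?thesis
    using assms index_mult_mat_sum[of "transpose_mat P" n n P n j j]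
    by (simp add: power2_eq_square)
qed

lemma orthogonal_real_mat_row_norm:
  assumes "orthogonal_real_mat P" "P \<in> carrier_mat n n" "i < n"
  shows "(\<Sum>l<n. (P $$ (i,l))\<^sup>2) = 1"
proof -
  have "(P * transpose_mat P) $$ (i,i) = 1"
    using assms by (simp add: orthogonal_real_mat_mult_transpose)
  then show ?thesis
    using assms index_mult_mat_sum[of P n n "transpose_mat P" n i i]
    by (simp add: power2_eq_square)
qed

lemma orthogonal_weighted_row_bound:
  fixes d :: "nat \<Rightarrow> real"
  assumes orth: "orthogonal_real_mat P" "P \<in> carrier_mat n n"
    and i: "i < n" and di: "d i > 0" and d_nonneg: "\<forall>l<n. d l \<ge> 0"
    and row_identity: "(\<Sum>l<n. (d l * P $$ (l,i) - d i * P $$ (i,l))\<^sup>2)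
      = (\<Sum>l<n. d l) * ((\<Sum>l<n. d l * (P $$ (l,i))\<^sup>2) + d i)"
  shows "(\<Sum>l<n. d l) \<le> d i - 2 * (\<Sum>l<n. d l * P $$ (l,i) * P $$ (i,l))"
proof -
  define s where "s = (\<Sum>l<n. d l)"
  define X where "X = (\<Sum>l<n. d l * P $$ (l,i) * P $$ (i,l))"
  have "(\<Sum>l<n. (d l * P $$ (l,i) - d i * P $$ (i,l))\<^sup>2)
      = (\<Sum>l<n. (d l)\<^sup>2 * (P $$ (l,i))\<^sup>2) - 2 * d i * X + (d i)\<^sup>2 * (\<Sum>l<n. (P $$ (i,l))\<^sup>2)"
    by (simp add: X_def power2_diff power_mult_distrib algebra_simps
        sum.distrib sum_subtractf sum_distrib_left)
  also have "\<dots> = (\<Sum>l<n. (d l)\<^sup>2 * (P $$ (l,i))\<^sup>2) - 2 * d i * X + (d i)\<^sup>2"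
    using orthogonal_real_mat_row_norm[OF orth i] by simp
  also have "(\<Sum>l<n. (d l)\<^sup>2 * (P $$ (l,i))\<^sup>2) \<le> s * (\<Sum>l<n. d l * (P $$ (l,i))\<^sup>2)"
    unfolding sum_distrib_left power2_eq_square[of "d _"]
  proof (rule sum_mono)
    fix l assume "l \<in> {..<n}"
    then have "d l \<le> s"
      unfolding s_def using d_nonneg by (intro member_le_sum) auto
    then show "d l * d l * (P $$ (l,i))\<^sup>2 \<le> s * (d l * (P $$ (l,i))\<^sup>2)"
      using d_nonneg \<open>l \<in> {..<n}\<close> by (simp add: mult_right_mono mult.assoc)
  qed
  finally have "s * d i \<le> d i * (d i - 2 * X)"
    using row_identity by (simp add: s_def algebra_simps power2_eq_square)
  then show ?thesis
    using di by (simp add: s_def X_def mult.commute)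
qed

lemma orthogonal_cross_sum_bound:
  fixes d :: "nat \<Rightarrow> real"
  assumes orth: "orthogonal_real_mat P" "P \<in> carrier_mat n n"
    and d_nonneg: "\<forall>l<n. d l \<ge> 0"
  shows "- (\<Sum>i<n. \<Sum>l<n. d l * P $$ (l,i) * P $$ (i,l)) \<le> (\<Sum>l<n. d l)"
proof -
  have "- 2 * (\<Sum>i<n. \<Sum>l<n. d l * P $$ (l,i) * P $$ (i,l))
      \<le> (\<Sum>i<n. \<Sum>l<n. d l * ((P $$ (l,i))\<^sup>2 + (P $$ (i,l))\<^sup>2))"
    unfolding sum_distrib_left
  proof (intro sum_mono)
    fix i l assume "l \<in> {..<n}"
    then have "0 \<le> d l * (P $$ (l,i) + P $$ (i,l))\<^sup>2"
      using d_nonneg by simp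
    then show "- 2 * (d l * P $$ (l,i) * P $$ (i,l)) \<le> d l * ((P $$ (l,i))\<^sup>2 + (P $$ (i,l))\<^sup>2)"
      by (simp add: power2_sum algebra_simps)
  qed
  also have "\<dots> = (\<Sum>l<n. d l * ((\<Sum>i<n. (P $$ (l,i))\<^sup>2) + (\<Sum>i<n. (P $$ (i,l))\<^sup>2)))"
    by (subst sum.swap) (simp add: distrib_left sum_distrib_left sum.distrib)
  also have "\<dots> = 2 * (\<Sum>l<n. d l)"
    using orthogonal_real_mat_row_norm[OF orth] orthogonal_real_mat_col_norm[OF orth]
    by (simp add: sum_distrib_left mult.commute)
  finally show ?thesis
    by simp
qed

lemma orthogonal_weighted_identity_dim_le_3:
  fixes d :: "nat \<Rightarrow> real"
  assumes orth: "orthogonal_real_mat P" "P \<in> carrier_mat n n"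
    and d_pos: "\<forall>l<n. d l > 0"
    and row_identity: "\<And>i. i < n \<Longrightarrow> (\<Sum>l<n. (d l * P $$ (l,i) - d i * P $$ (i,l))\<^sup>2)
      = (\<Sum>l<n. d l) * ((\<Sum>l<n. d l * (P $$ (l,i))\<^sup>2) + d i)"
  shows "n \<le> 3"
proof (cases "n = 0")
  case False
  define s where "s = (\<Sum>l<n. d l)"
  have d_nonneg: "\<forall>l<n. d l \<ge> 0"
    using d_pos by (simp add: less_imp_le)
  have "s > 0"
    unfolding s_def using False d_pos by (intro sum_pos) auto
  have "real n * s = (\<Sum>i<n. s)"
    by simp
  also have "\<dots> \<le> (\<Sum>i<n. d i - 2 * (\<Sum>l<n. d l * P $$ (l,i) * P $$ (i,l)))"
    unfolding s_def using orthogonal_weighted_row_bound[OF orth _ _ d_nonneg row_identity] d_pos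
    by (intro sum_mono) auto
  also have "\<dots> = s - 2 * (\<Sum>i<n. \<Sum>l<n. d l * P $$ (l,i) * P $$ (i,l))"
    by (simp add: s_def sum_subtractf sum_distrib_left)
  also have "\<dots> \<le> 3 * s"
    using orthogonal_cross_sum_bound[OF orth d_nonneg] by (simp add: s_def)
  finally show ?thesis
    using \<open>s > 0\<close> by simp
qed simp

lemma antidiagonal_of_row_identity_2:
  fixes a b c e d0 d1 :: real
  assumes d0: "d0 > 0" and d1: "d1 > 0"
    and row0: "a\<^sup>2 + b\<^sup>2 = 1" and col0: "a\<^sup>2 + c\<^sup>2 = 1" and col1: "b\<^sup>2 + e\<^sup>2 = 1"
    and identity: "(d1 * c - d0 * b)\<^sup>2 = (d0 + d1) * (d0 * a\<^sup>2 + d1 * c\<^sup>2 + d0)"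
  shows "a = 0 \<and> e = 0 \<and> c = - b"
proof -
  have c_sq: "c\<^sup>2 = 1 - a\<^sup>2" and b_sq: "b\<^sup>2 = 1 - a\<^sup>2"
    using row0 col0 by linarith+
  then have "\<bar>c\<bar> = \<bar>b\<bar>"
    by (metis real_sqrt_abs)
  then have "\<bar>d1 * c - d0 * b\<bar> \<le> (d0 + d1) * \<bar>b\<bar>"
    using abs_triangle_ineq4[of "d1 * c" "d0 * b"] d0 d1 by (simp add: abs_mult distrib_right)
  then have "(d1 * c - d0 * b)\<^sup>2 \<le> ((d0 + d1) * \<bar>b\<bar>)\<^sup>2"
    by (metis abs_ge_zero power2_abs power_mono)
  then have "(d0 + d1) * (d0 * a\<^sup>2 + d1 * c\<^sup>2 + d0) \<le> (d0 + d1) * ((d0 + d1) * b\<^sup>2)"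
    using identity by (simp add: power_mult_distrib power2_eq_square[of "d0 + d1"] mult.assoc)
  then have "d0 * a\<^sup>2 + d1 * c\<^sup>2 + d0 \<le> (d0 + d1) * b\<^sup>2"
    using d0 d1 by simp
  then have "d0 * a\<^sup>2 \<le> 0"
    unfolding c_sq b_sq by (simp add: algebra_simps)
  then have a: "a = 0"
    using d0 by (simp add: mult_le_0_iff)
  have "c \<noteq> b"
  proof
    assume "c = b"
    have "b\<^sup>2 = 1"
      using b_sq a by simp
    have "(d1 - d0)\<^sup>2 * b\<^sup>2 = (d0 + d1) * (d1 * b\<^sup>2 + d0)"
      using identity a \<open>c = b\<close> by (simp add: power_mult_distrib flip: left_diff_distrib)
    then have "(d1 - d0)\<^sup>2 = (d0 + d1) * (d1 + d0)"
      using \<open>b\<^sup>2 = 1\<close> by simp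
    then have "d0 * d1 = 0"
      by (simp add: power2_eq_square algebra_simps)
    then show False
      using d0 d1 by simp
  qed
  then have "c = - b"
    using \<open>\<bar>c\<bar> = \<bar>b\<bar>\<close> by arith
  moreover have "e = 0"
    using a row0 col1 by simp
  ultimately show ?thesis
    using a by blast
qed

lemma eq_mat_of_rows_list_2I:
  fixes M :: "real mat"
  assumes "M \<in> carrier_mat 2 2"
    and "M $$ (0,0) = x" "M $$ (0,1) = y" "M $$ (1,0) = z" "M $$ (1,1) = w"
  shows "M = mat_of_rows_list 2 [[x, y], [z, w]]"
  using assms by (intro eq_matI) (auto simp: mat_of_rows_list_def numeral_2_eq_2 less_Suc_eq)

locale orthogonal_diagonal_equations =
  fixes n :: nat and K P A :: "real mat" and d :: "nat \<Rightarrow> real" and \<alpha> :: real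
  assumes K_carrier: "K \<in> carrier_mat n n" and P_carrier: "P \<in> carrier_mat n n"
    and P_orthogonal: "orthogonal_real_mat P"
    and d_pos: "\<forall>i<n. d i > 0"
    and A_diag: "A = diag_real_mat n (\<lambda>i. - d i)"
    and alpha_sq: "\<alpha>\<^sup>2 = (\<Sum>i<n. d i)"
    and K_sq: "K * K = transpose_mat P * A * P + A"
    and alpha_K: "\<alpha> \<cdot>\<^sub>m K = A * P - transpose_mat P * A"
begin

lemma A_carrier: "A \<in> carrier_mat n n"
  unfolding A_diag diag_real_mat_eq_mat_diag by (rule mat_diag_dim)

lemma A_diag_index: "i < n \<Longrightarrow> A $$ (i,i) = - d i"
  unfolding A_diag diag_real_mat_def by simp

lemma transpose_P_mult_A_index:
  assumes "i < n" "j < n"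
  shows "(transpose_mat P * A) $$ (i,j) = - d j * P $$ (j,i)"
  using index_mult_diag_real_mat[of "transpose_mat P" n n i j "\<lambda>i. - d i"] assms P_carrier
  unfolding A_diag by (simp del: index_mult_mat(1))

lemma alpha_K_index:
  assumes "i < n" "j < n"
  shows "\<alpha> * K $$ (i,j) = d j * P $$ (j,i) - d i * P $$ (i,j)"
proof -
  have "\<alpha> * K $$ (i,j) = (A * P) $$ (i,j) - (transpose_mat P * A) $$ (i,j)"
    using arg_cong[OF alpha_K, of "\<lambda>M. M $$ (i,j)"] assms K_carrier P_carrier A_carrier
    by (simp del: index_mult_mat(1))
  moreover have "(A * P) $$ (i,j) = - d i * P $$ (i,j)"
    unfolding A_diag using index_diag_real_mat_mult[OF P_carrier assms] .
  ultimately show ?thesis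
    using transpose_P_mult_A_index[OF assms] by linarith
qed

lemma K_sq_diag_index:
  assumes "i < n"
  shows "(K * K) $$ (i,i) = - (\<Sum>l<n. d l * (P $$ (l,i))\<^sup>2) - d i"
proof -
  have "(transpose_mat P * A * P) $$ (i,i) = (\<Sum>l<n. (transpose_mat P * A) $$ (i,l) * P $$ (l,i))"
    using assms P_carrier A_carrier by (intro index_mult_mat_sum) auto
  also have "\<dots> = - (\<Sum>l<n. d l * (P $$ (l,i))\<^sup>2)"
    using assms by (simp add: transpose_P_mult_A_index power2_eq_square sum_negf flip: mult.assoc
        del: index_mult_mat(1))
  finally show ?thesis
    using arg_cong[OF K_sq, of "\<lambda>M. M $$ (i,i)"] assms P_carrier A_carrier
    by (simp add: A_diag_index del: index_mult_mat(1))
qed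

lemma row_identity:
  assumes "i < n"
  shows "(\<Sum>l<n. (d l * P $$ (l,i) - d i * P $$ (i,l))\<^sup>2)
    = (\<Sum>l<n. d l) * ((\<Sum>l<n. d l * (P $$ (l,i))\<^sup>2) + d i)"
proof -
  have "\<alpha>\<^sup>2 * (K * K) $$ (i,i) = (\<Sum>l<n. (\<alpha> * K $$ (i,l)) * (\<alpha> * K $$ (l,i)))"
    using index_mult_mat_sum[OF K_carrier K_carrier assms assms]
    by (simp add: sum_distrib_left power2_eq_square algebra_simps)
  also have "\<dots> = - (\<Sum>l<n. (d l * P $$ (l,i) - d i * P $$ (i,l))\<^sup>2)"
    using assms by (simp add: alpha_K_index power2_eq_square algebra_simps flip: sum_negf)
  finally show ?thesis
    using K_sq_diag_index[OF assms] by (simp add: alpha_sq algebra_simps)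
qed

lemma dim_le_3: "n \<le> 3"
  using orthogonal_weighted_identity_dim_le_3[OF P_orthogonal P_carrier d_pos row_identity] .

lemma two_dim_solution:
  assumes "n = 2"
  obtains b where "b \<in> {1, -1}" "P = mat_of_rows_list 2 [[0, b], [- b, 0]]"
    "K = mat_of_rows_list 2 [[0, - b * \<alpha>], [b * \<alpha>, 0]]"
proof
  have row0: "(P $$ (0,0))\<^sup>2 + (P $$ (0,1))\<^sup>2 = 1"
    using orthogonal_real_mat_row_norm[OF P_orthogonal P_carrier, of 0] assms
    by (simp add: numeral_2_eq_2)
  have cols: "(P $$ (0,0))\<^sup>2 + (P $$ (1,0))\<^sup>2 = 1" "(P $$ (0,1))\<^sup>2 + (P $$ (1,1))\<^sup>2 = 1"
    using orthogonal_real_mat_col_norm[OF P_orthogonal P_carrier] assms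
    by (simp_all add: numeral_2_eq_2)
  have "(d 1 * P $$ (1,0) - d 0 * P $$ (0,1))\<^sup>2
      = (d 0 + d 1) * (d 0 * (P $$ (0,0))\<^sup>2 + d 1 * (P $$ (1,0))\<^sup>2 + d 0)"
    using row_identity[of 0] assms by (simp add: numeral_2_eq_2)
  moreover have "d 0 > 0" "d 1 > 0"
    using d_pos assms by auto
  ultimately have P_entries: "P $$ (0,0) = 0" "P $$ (1,1) = 0" "P $$ (1,0) = - P $$ (0,1)"
    using row0 cols antidiagonal_of_row_identity_2[of "d 0" "d 1"] by auto
  define b where "b = P $$ (0,1)"
  show "b \<in> {1, -1}"
    using row0 P_entries by (simp add: b_def power2_eq_1_iff)
  show "P = mat_of_rows_list 2 [[0, b], [- b, 0]]"
    using P_carrier assms P_entries by (intro eq_mat_of_rows_list_2I) (simp_all add: b_def)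
  have "\<alpha> \<noteq> 0"
    using alpha_sq \<open>d 0 > 0\<close> \<open>d 1 > 0\<close> assms by (auto simp: numeral_2_eq_2)
  have sum_d: "d 0 + d 1 = \<alpha> * \<alpha>"
    using alpha_sq assms by (simp add: numeral_2_eq_2 power2_eq_square)
  have "\<alpha> * K $$ (0,1) = - b * (d 0 + d 1)" "\<alpha> * K $$ (1,0) = b * (d 0 + d 1)"
    using alpha_K_index[of 0 1] alpha_K_index[of 1 0] assms P_entries
    by (simp_all add: b_def algebra_simps)
  then have "\<alpha> * K $$ (0,1) = \<alpha> * (- b * \<alpha>)" "\<alpha> * K $$ (1,0) = \<alpha> * (b * \<alpha>)"
    unfolding sum_d by (simp_all add: mult_ac)
  then have "K $$ (0,1) = - b * \<alpha>" "K $$ (1,0) = b * \<alpha>"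
    using \<open>\<alpha> \<noteq> 0\<close> mult_left_cancel by blast+
  moreover have "\<alpha> * K $$ (0,0) = 0" "\<alpha> * K $$ (1,1) = 0"
    using alpha_K_index[of 0 0] alpha_K_index[of 1 1] assms by simp_all
  ultimately show "K = mat_of_rows_list 2 [[0, - b * \<alpha>], [b * \<alpha>, 0]]"
    using K_carrier assms \<open>\<alpha> \<noteq> 0\<close> by (intro eq_mat_of_rows_list_2I) simp_all
qed

end

theorem lemma4p3:
  fixes k :: nat and K P Pinv A :: "real mat" and al :: "nat \<Rightarrow> real" and \<alpha> :: real
  assumes "k \<ge> 1"
    and "K \<in> carrier_mat (2*k) (2*k)" and "P \<in> carrier_mat (2*k) (2*k)"
    and "Pinv \<in> carrier_mat (2*k) (2*k)"
    and "skew_symmetric_mat K" and "invertible_mat K"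
    and "orthogonal_real_mat P"
    and "P * Pinv = 1\<^sub>m (2*k)" and "Pinv * P = 1\<^sub>m (2*k)"
    and "\<forall>i<2*k. al i \<noteq> 0"
    and "A = diag_real_mat (2*k) (\<lambda>i. - (al i)\<^sup>2)"
    and "\<alpha> = sqrt (\<Sum>i<2*k. (al i)\<^sup>2) \<or> \<alpha> = - sqrt (\<Sum>i<2*k. (al i)\<^sup>2)"
    and "K * K = Pinv * A * P + A"
    and "\<alpha> \<cdot>\<^sub>m K = A * P - Pinv * A"
  shows "k = 1 \<and> (\<exists>\<epsilon> \<eta> :: real. \<epsilon> \<in> {1, -1} \<and> \<eta> \<in> {1, -1} \<and>
      A = mat_of_rows_list 2 [[- (al 0)\<^sup>2, 0], [0, - (al 1)\<^sup>2]] \<and>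
      K = mat_of_rows_list 2 [[0, \<epsilon> * sqrt ((al 0)\<^sup>2 + (al 1)\<^sup>2)],
                              [- \<epsilon> * sqrt ((al 0)\<^sup>2 + (al 1)\<^sup>2), 0]] \<and>
      P = mat_of_rows_list 2 [[0, - \<eta> * \<epsilon>], [\<eta> * \<epsilon>, 0]])"
proof -
  obtain \<sigma> :: real where \<sigma>: "\<sigma> \<in> {1, -1}" "\<alpha> = \<sigma> * sqrt (\<Sum>i<2*k. (al i)\<^sup>2)"
    using assms(12) by (metis insertI1 insertI2 mult_1 mult_minus1)
  have "\<alpha>\<^sup>2 = (\<Sum>i<2*k. (al i)\<^sup>2)"
    using \<sigma> by (auto simp: power_mult_distrib sum_nonneg)
  moreover have "Pinv = transpose_mat P"
    using assms(7,3,4,8) by (rule orthogonal_real_mat_right_inverse)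
  ultimately interpret orthogonal_diagonal_equations "2*k" K P A "\<lambda>i. (al i)\<^sup>2" \<alpha>
    using assms by unfold_locales auto
  have "k = 1"
    using dim_le_3 assms(1) by simp
  then obtain b where b: "b \<in> {1, -1}"
    and P_eq: "P = mat_of_rows_list 2 [[0, b], [- b, 0]]"
    and K_eq: "K = mat_of_rows_list 2 [[0, - b * \<alpha>], [b * \<alpha>, 0]]"
    using two_dim_solution by auto
  have "A = mat_of_rows_list 2 [[- (al 0)\<^sup>2, 0], [0, - (al 1)\<^sup>2]]"
    using A_carrier \<open>k = 1\<close> by (intro eq_mat_of_rows_list_2I) (simp_all add: A_diag diag_real_mat_def)
  moreover have "\<alpha> = \<sigma> * sqrt ((al 0)\<^sup>2 + (al 1)\<^sup>2)"
    using \<sigma>(2) \<open>k = 1\<close> by (simp add: numeral_2_eq_2)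
  ultimately show ?thesis
    using \<open>k = 1\<close> b \<sigma>(1) P_eq K_eq by (intro conjI exI[of _ "- b * \<sigma>"] exI[of _ \<sigma>]) auto
qed

end
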